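(* Let $R$ be a unital associative algebra over an infinite field $F$, let $n>1$ be an integer, and let $p\in F[x]$ be a nonconstant polynomial. If $A\in\mathrm{M}_n(R)$ is similar (via an invertible matrix in $\mathrm{M}_n(R)$) to a matrix in $\mathrm{M}_n(R)$ all of whose diagonal entries are zero, then there exist $A_1,B_1\in\mathrm{M}_n(R)$ with $A=p(A_1B_1)-p(B_1A_1)$. *)

theory Defs
  imports "HOL-Analysis.Analysis" "HOL-Computational_Algebra.Polynomial"
begin

text \<open>A unital associative algebra R over a field F is represented by a unital ring
  type 'r together with the structure map phi : F -> R (c maps to c times 1), which is a
  unital ring homomorphism into the centre of R; scalar multiplication is c.r = phi c * r.\<close>
definition alg_struct :: "('f::field \<Rightarrow> 'r::ring_1) \<Rightarrow> bool" where
  "alg_struct \<phi> \<longleftrightarrow> \<phi> 1 = 1 \<and> (\<forall>a b. \<phi> (a + b) = \<phi> a + \<phi> b)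
     \<and> (\<forall>a b. \<phi> (a * b) = \<phi> a * \<phi> b) \<and> (\<forall>c r. \<phi> c * r = r * \<phi> c)"

fun mat_pow :: "'r::semiring_1^'n^'n \<Rightarrow> nat \<Rightarrow> 'r^'n^'n" where
  "mat_pow M 0 = mat 1"
| "mat_pow M (Suc k) = M ** mat_pow M k"

definition mat_scale :: "('f \<Rightarrow> 'r::ring_1) \<Rightarrow> 'f \<Rightarrow> 'r^'n^'m \<Rightarrow> 'r^'n^'m" where
  "mat_scale \<phi> c M = (\<chi> i j. \<phi> c * M $ i $ j)"

definition poly_mat :: "('f::field \<Rightarrow> 'r::ring_1) \<Rightarrow> 'f poly \<Rightarrow> 'r^'n^'n \<Rightarrow> 'r^'n^'n" where
  "poly_mat \<phi> p M = (\<Sum>i\<le>degree p. mat_scale \<phi> (coeff p i) (mat_pow M i))"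

end

theory Submission
  imports Defs
begin

text \<open>Enumerate the indices and split the zero-diagonal matrix D as U - L with U strictly upper
  and L strictly lower triangular. If \<Lambda> is diagonal with central entries whose pairwise
  differences are invertible, then \<Lambda> + U and \<Lambda> + L are both similar to \<Lambda>: the equation
  (\<Lambda> + U) T = T \<Lambda> is solved by a unitriangular T, determined entry by entry moving away from
  the diagonal. As F is infinite and p is nonconstant, there are m_i with p(m_i) pairwise
  distinct, so \<Lambda> = diag(p(m_i)) = p(M) for M = diag(m_i). Finally, two matrices
  S M S\<inverse> and V M V\<inverse> similar to the same M are always XY and YX, for X = S M V\<inverse> and
  Y = V S\<inverse>. Applied to P (\<Lambda> + U) P\<inverse> and P (\<Lambda> + L) P\<inverse>, which are still similar
  to \<Lambda> = p(M), this gives A = P D P\<inverse> = p(XY) - p(YX).\<close>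

lemma alg_struct_one: "alg_struct \<phi> \<Longrightarrow> \<phi> 1 = 1"
  unfolding alg_struct_def by blast

lemma alg_struct_add: "alg_struct \<phi> \<Longrightarrow> \<phi> (a + b) = \<phi> a + \<phi> b"
  unfolding alg_struct_def by blast

lemma alg_struct_mult: "alg_struct \<phi> \<Longrightarrow> \<phi> (a * b) = \<phi> a * \<phi> b"
  unfolding alg_struct_def by blast

lemma alg_struct_central: "alg_struct \<phi> \<Longrightarrow> \<phi> c * r = r * \<phi> c"
  unfolding alg_struct_def by blast

lemma alg_struct_zero: "alg_struct \<phi> \<Longrightarrow> \<phi> 0 = 0"
  using alg_struct_add[of \<phi> 0 0] by simp

lemma alg_struct_diff: "alg_struct \<phi> \<Longrightarrow> \<phi> (a - b) = \<phi> a - \<phi> b"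
  using alg_struct_add[of \<phi> "a - b" b] by (simp add: eq_diff_eq)

lemma alg_struct_diff_right_inverse:
  assumes "alg_struct \<phi>" "a \<noteq> b"
  shows "(\<phi> a - \<phi> b) * \<phi> (inverse (a - b)) = 1"
  using assms by (simp add: alg_struct_one flip: alg_struct_diff alg_struct_mult)

lemma alg_struct_sum: "alg_struct \<phi> \<Longrightarrow> \<phi> (sum f S) = (\<Sum>x\<in>S. \<phi> (f x))"
  by (induction S rule: infinite_finite_induct) (auto simp: alg_struct_zero alg_struct_add)

lemma alg_struct_power: "alg_struct \<phi> \<Longrightarrow> \<phi> (a ^ k) = \<phi> a ^ k"
  by (induction k) (auto simp: alg_struct_one alg_struct_mult)

lemma alg_struct_poly:
  "alg_struct \<phi> \<Longrightarrow> \<phi> (poly p a) = (\<Sum>i\<le>degree p. \<phi> (coeff p i) * \<phi> a ^ i)"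
  by (simp add: poly_altdef alg_struct_sum alg_struct_mult alg_struct_power)

lemma matrix_add_rdistrib: "((B + C) :: 'a::semiring_1^'n^'m) ** A = B ** A + C ** A"
  by (simp add: matrix_matrix_mult_def vec_eq_iff ring_distribs sum.distrib)

lemma matrix_diff_ldistrib: "(A :: 'a::ring_1^'n^'m) ** (B - C) = A ** B - A ** C"
  by (simp add: matrix_matrix_mult_def vec_eq_iff ring_distribs sum_subtractf)

lemma matrix_diff_rdistrib: "((B - C) :: 'a::ring_1^'n^'m) ** A = B ** A - C ** A"
  by (simp add: matrix_matrix_mult_def vec_eq_iff ring_distribs sum_subtractf)

lemma matrix_sum_ldistrib: "(A :: 'a::semiring_1^'n^'m) ** sum f S = (\<Sum>x\<in>S. A ** f x)"
  by (induction S rule: infinite_finite_induct) (auto simp: matrix_add_ldistrib)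

lemma matrix_sum_rdistrib: "sum f S ** (A :: 'a::semiring_1^'n^'m) = (\<Sum>x\<in>S. f x ** A)"
  by (induction S rule: infinite_finite_induct) (auto simp: matrix_add_rdistrib)

lemma mat_scale_mult_left: "mat_scale \<phi> c A ** B = mat_scale \<phi> c (A ** B)"
  by (simp add: mat_scale_def matrix_matrix_mult_def vec_eq_iff sum_distrib_left mult.assoc)

lemma mat_scale_mult_right:
  assumes "alg_struct \<phi>"
  shows "A ** mat_scale \<phi> c B = mat_scale \<phi> c (A ** B)"
proof -
  have "A$i$k * (\<phi> c * B$k$j) = \<phi> c * (A$i$k * B$k$j)" for i k j
    by (metis mult.assoc alg_struct_central[OF assms])
  then show ?thesis
    by (simp add: mat_scale_def matrix_matrix_mult_def vec_eq_iff sum_distrib_left)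
qed

definition similar_mat :: "'a::semiring_1^'n^'n \<Rightarrow> 'a^'n^'n \<Rightarrow> bool" where
  "similar_mat M N \<longleftrightarrow> (\<exists>T T'. T ** T' = mat 1 \<and> T' ** T = mat 1 \<and> M = T ** N ** T')"

lemma similar_matI: "T ** T' = mat 1 \<Longrightarrow> T' ** T = mat 1 \<Longrightarrow> M = T ** N ** T' \<Longrightarrow> similar_mat M N"
  unfolding similar_mat_def by blast

lemma similar_matE:
  assumes "similar_mat M N"
  obtains T T' where "T ** T' = mat 1" "T' ** T = mat 1" "M = T ** N ** T'"
  using assms unfolding similar_mat_def by blast

lemma similar_mat_trans:
  assumes "similar_mat M N" "similar_mat N K"
  shows "similar_mat M K"
proof -
  obtain T T' where T: "T ** T' = mat 1" "T' ** T = mat 1" "M = T ** N ** T'"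
    using assms(1) by (rule similar_matE)
  obtain S S' where S: "S ** S' = mat 1" "S' ** S = mat 1" "N = S ** K ** S'"
    using assms(2) by (rule similar_matE)
  have "(T ** S) ** (S' ** T') = T ** (S ** S') ** T'"
    and "(S' ** T') ** (T ** S) = S' ** (T' ** T) ** S"
    and "M = (T ** S) ** K ** (S' ** T')"
    using T(3) S(3) by (simp_all add: matrix_mul_assoc)
  then show ?thesis
    using T S by (auto intro: similar_matI)
qed

lemma similar_mats_are_swapped_products:
  assumes "similar_mat M1 N" "similar_mat M2 N"
  shows "\<exists>X Y. X ** Y = M1 \<and> Y ** X = M2"
proof -
  obtain T T' where T: "T ** T' = mat 1" "T' ** T = mat 1" "M1 = T ** N ** T'"
    using assms(1) by (rule similar_matE)
  obtain V V' where V: "V ** V' = mat 1" "V' ** V = mat 1" "M2 = V ** N ** V'"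
    using assms(2) by (rule similar_matE)
  have "(T ** N ** V') ** (V ** T') = T ** N ** (V' ** V) ** T'"
    and "(V ** T') ** (T ** N ** V') = V ** (T' ** T) ** N ** V'"
    by (simp_all add: matrix_mul_assoc)
  then show ?thesis
    using T V by auto
qed

lemma mat_pow_similar:
  assumes "T ** T' = mat 1" "T' ** T = mat 1"
  shows "mat_pow (T ** M ** T') k = T ** mat_pow M k ** T'"
proof (induction k)
  case 0
  then show ?case using assms(1) by simp
next
  case (Suc k)
  then have "mat_pow (T ** M ** T') (Suc k) = T ** M ** (T' ** T) ** mat_pow M k ** T'"
    by (simp add: matrix_mul_assoc)
  then show ?case
    using assms(2) by (simp add: matrix_mul_assoc)
qed

lemma poly_mat_similar:
  assumes "alg_struct \<phi>" "T ** T' = mat 1" "T' ** T = mat 1"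
  shows "poly_mat \<phi> p (T ** M ** T') = T ** poly_mat \<phi> p M ** T'"
  unfolding poly_mat_def mat_pow_similar[OF assms(2,3)] matrix_sum_ldistrib matrix_sum_rdistrib
  by (simp add: mat_scale_mult_left mat_scale_mult_right[OF assms(1)])

lemma similar_poly_mat_diff_eq_poly_commutator:
  assumes "alg_struct \<phi>" "similar_mat M1 (poly_mat \<phi> p N)" "similar_mat M2 (poly_mat \<phi> p N)"
  shows "\<exists>X Y. M1 - M2 = poly_mat \<phi> p (X ** Y) - poly_mat \<phi> p (Y ** X)"
proof -
  obtain T T' where T: "T ** T' = mat 1" "T' ** T = mat 1" "M1 = T ** poly_mat \<phi> p N ** T'"
    using assms(2) by (rule similar_matE)
  obtain V V' where V: "V ** V' = mat 1" "V' ** V = mat 1" "M2 = V ** poly_mat \<phi> p N ** V'"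
    using assms(3) by (rule similar_matE)
  have "similar_mat (T ** N ** T') N" "similar_mat (V ** N ** V') N"
    using T V by (auto intro: similar_matI)
  then obtain X Y where "X ** Y = T ** N ** T'" "Y ** X = V ** N ** V'"
    using similar_mats_are_swapped_products by blast
  then have "M1 - M2 = poly_mat \<phi> p (X ** Y) - poly_mat \<phi> p (Y ** X)"
    using T V by (simp add: poly_mat_similar[OF assms(1)])
  then show ?thesis by blast
qed

definition diag_mat :: "('n \<Rightarrow> 'a::zero) \<Rightarrow> 'a^'n^'n" where
  "diag_mat d = (\<chi> i j. if i = j then d i else 0)"

lemma diag_mat_mult_left: "(diag_mat d ** A)$i$j = d i * (A :: 'a::semiring_1^'m^'n)$i$j"
  by (simp add: diag_mat_def matrix_matrix_mult_def if_distrib if_distribR sum.delta cong: if_cong)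

lemma diag_mat_mult_right: "(A ** diag_mat d)$i$j = (A :: 'a::semiring_1^'n^'m)$i$j * d j"
  by (simp add: diag_mat_def matrix_matrix_mult_def if_distrib if_distribR sum.delta' cong: if_cong)

lemma mat_pow_diag_mat: "mat_pow (diag_mat d) k = diag_mat (\<lambda>i. d i ^ k)"
proof (induction k)
  case 0
  then show ?case by (simp add: diag_mat_def mat_def)
next
  case (Suc k)
  then show ?case
    by (simp add: vec_eq_iff diag_mat_mult_left) (simp add: diag_mat_def)
qed

lemma poly_mat_diag_mat:
  assumes "alg_struct \<phi>"
  shows "poly_mat \<phi> p (diag_mat (\<lambda>i. \<phi> (m i))) = diag_mat (\<lambda>i. \<phi> (poly p (m i)))"
  unfolding poly_mat_def mat_pow_diag_mat
  by (auto simp: vec_eq_iff mat_scale_def diag_mat_def alg_struct_poly[OF assms]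
      alg_struct_zero[OF assms])

definition upper_unitriangular :: "('n \<Rightarrow> nat) \<Rightarrow> 'a::{zero,one}^'n^'n \<Rightarrow> bool" where
  "upper_unitriangular \<iota> T \<longleftrightarrow> (\<forall>i. T$i$i = 1) \<and> (\<forall>i j. \<iota> j < \<iota> i \<longrightarrow> T$i$j = 0)"

definition strictly_upper :: "('n \<Rightarrow> nat) \<Rightarrow> 'a::zero^'n^'n \<Rightarrow> bool" where
  "strictly_upper \<iota> B \<longleftrightarrow> (\<forall>i j. \<iota> j \<le> \<iota> i \<longrightarrow> B$i$j = 0)"

lemma strictly_upper_mult_entry:
  fixes B :: "'a::semiring_1^'n::finite^'n"
  assumes "strictly_upper \<iota> B" "\<And>i j. \<iota> j < \<iota> i \<Longrightarrow> X$i$j = 0"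
  shows "(B ** X)$i$j = (\<Sum>k | \<iota> i < \<iota> k \<and> \<iota> k \<le> \<iota> j. B$i$k * X$k$j)"
proof -
  have "B$i$k * X$k$j = 0" if "\<not> (\<iota> i < \<iota> k \<and> \<iota> k \<le> \<iota> j)" for k
    using that assms by (auto simp: strictly_upper_def not_less)
  then show ?thesis
    unfolding matrix_matrix_mult_def by (auto intro!: sum.mono_neutral_right)
qed

lemma strictly_upper_mult:
  fixes B :: "'a::semiring_1^'n::finite^'n"
  assumes "strictly_upper \<iota> B" "\<And>i j. \<iota> j < \<iota> i \<Longrightarrow> X$i$j = 0"
  shows "strictly_upper \<iota> (B ** X)"
  unfolding strictly_upper_def
proof (intro allI impI)
  fix i j
  assume "\<iota> j \<le> \<iota> i"
  then have empty: "{k. \<iota> i < \<iota> k \<and> \<iota> k \<le> \<iota> j} = {}"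
    by auto
  show "(B ** X)$i$j = 0"
    by (simp only: strictly_upper_mult_entry[OF assms] empty sum.empty)
qed

function upper_solve :: "('n::finite \<Rightarrow> nat) \<Rightarrow> ('n \<Rightarrow> 'n \<Rightarrow> 'r::ring_1) \<Rightarrow> 'r^'n^'n \<Rightarrow> 'n \<Rightarrow> 'n \<Rightarrow> 'r"
  where
  "upper_solve \<iota> c B i j =
     (if i = j then 1
      else if \<iota> i < \<iota> j
      then c i j * (\<Sum>k | \<iota> i < \<iota> k \<and> \<iota> k \<le> \<iota> j. B$i$k * upper_solve \<iota> c B k j)
      else 0)"
  by pat_completeness auto
termination
  by (relation "Wellfounded.measure (\<lambda>(\<iota>, c, B, i, j). \<iota> j - \<iota> i)") auto

declare upper_solve.simps [simp del]

lemma upper_unitriangular_solution_exists: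
  fixes B :: "'r::ring_1^'n::finite^'n"
  assumes "strictly_upper \<iota> B"
  shows "\<exists>X. upper_unitriangular \<iota> X \<and> (\<forall>i j. \<iota> i < \<iota> j \<longrightarrow> X$i$j = c i j * (B ** X)$i$j)"
proof -
  define X :: "'r^'n^'n" where "X = (\<chi> i j. upper_solve \<iota> c B i j)"
  have lower: "X$i$j = 0" if "\<iota> j < \<iota> i" for i j
    using that by (auto simp: X_def upper_solve.simps)
  have "upper_unitriangular \<iota> X"
    using lower by (simp add: upper_unitriangular_def X_def upper_solve.simps)
  moreover have "X$i$j = c i j * (B ** X)$i$j" if "\<iota> i < \<iota> j" for i j
  proof -
    have "X$i$j = upper_solve \<iota> c B i j"
      by (simp add: X_def)
    also have "\<dots> = c i j * (\<Sum>k | \<iota> i < \<iota> k \<and> \<iota> k \<le> \<iota> j. B$i$k * upper_solve \<iota> c B k j)"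
      using that by (subst upper_solve.simps) auto
    also have "\<dots> = c i j * (B ** X)$i$j"
      by (simp add: strictly_upper_mult_entry[OF assms lower]) (simp add: X_def)
    finally show ?thesis .
  qed
  ultimately show ?thesis by blast
qed

lemma upper_unitriangular_right_inverse:
  fixes T :: "'r::ring_1^'n::finite^'n"
  assumes "inj \<iota>" "upper_unitriangular \<iota> T"
  shows "\<exists>T'. T ** T' = mat 1 \<and> upper_unitriangular \<iota> T'"
proof -
  have N: "strictly_upper \<iota> (T - mat 1)"
    using assms by (auto simp: strictly_upper_def upper_unitriangular_def mat_def le_less inj_eq)
  obtain X where X: "upper_unitriangular \<iota> X"
    and X_rec: "\<And>i j. \<iota> i < \<iota> j \<Longrightarrow> X$i$j = - 1 * ((T - mat 1) ** X)$i$j"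
    using upper_unitriangular_solution_exists[OF N, of "\<lambda>_ _. - 1"] by blast
  have NX: "strictly_upper \<iota> ((T - mat 1) ** X)"
    using N X by (auto simp: upper_unitriangular_def intro: strictly_upper_mult)
  have "(T ** X)$i$j = mat 1 $ i $ j" for i j
  proof -
    have "T ** X = X + (T - mat 1) ** X"
      by (simp add: matrix_diff_rdistrib)
    then have TX: "(T ** X)$i$j = X$i$j + ((T - mat 1) ** X)$i$j"
      by simp
    consider "\<iota> i < \<iota> j" | "i = j" | "\<iota> j < \<iota> i"
      using assms(1) by (metis injD linorder_neqE_nat)
    then show ?thesis
      using TX X_rec X NX by cases (auto simp: mat_def upper_unitriangular_def strictly_upper_def)
  qed
  then show ?thesis
    using X by (auto simp: vec_eq_iff)
qed

lemma upper_unitriangular_invertible: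
  fixes T :: "'r::ring_1^'n::finite^'n"
  assumes "inj \<iota>" "upper_unitriangular \<iota> T"
  shows "invertible T"
proof -
  obtain T' where T': "T ** T' = mat 1" "upper_unitriangular \<iota> T'"
    using upper_unitriangular_right_inverse[OF assms] by blast
  obtain T'' where T'': "T' ** T'' = mat 1"
    using upper_unitriangular_right_inverse[OF assms(1) T'(2)] by blast
  have "T = (T ** T') ** T''"
    using T'' by (simp flip: matrix_mul_assoc)
  then have "T'' = T"
    using T'(1) by simp
  then show ?thesis
    using T' T'' by (auto simp: invertible_def)
qed

lemma diag_mat_plus_strictly_upper_similar:
  fixes d :: "'n::finite \<Rightarrow> 'r::ring_1"
  assumes "inj \<iota>" "strictly_upper \<iota> U"
    and central: "\<And>i x. d i * x = x * d i"
    and gaps: "\<And>i j. i \<noteq> j \<Longrightarrow> \<exists>c. (d j - d i) * c = 1"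
  shows "similar_mat (diag_mat d + U) (diag_mat d)"
proof -
  define c where "c i j = (SOME c. (d j - d i) * c = 1)" for i j
  have c: "(d j - d i) * c i j = 1" if "i \<noteq> j" for i j
    unfolding c_def using gaps[OF that] by (rule someI_ex)
  \<comment> \<open>Entry (i, j) of (diag d + U) T = T diag d reads d i T_ij + (U T)_ij = T_ij d j;
    as d j is central, it is solved by T_ij = (d j - d i)\<inverse> (U T)_ij.\<close>
  obtain T where T: "upper_unitriangular \<iota> T"
    and T_rec: "\<And>i j. \<iota> i < \<iota> j \<Longrightarrow> T$i$j = c i j * (U ** T)$i$j"
    using upper_unitriangular_solution_exists[OF assms(2)] by blast
  have UT: "strictly_upper \<iota> (U ** T)"
    using assms(2) T by (auto simp: upper_unitriangular_def intro: strictly_upper_mult)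
  have "((diag_mat d + U) ** T)$i$j = (T ** diag_mat d)$i$j" for i j
  proof -
    have lhs: "((diag_mat d + U) ** T)$i$j = d i * T$i$j + (U ** T)$i$j"
      by (simp add: matrix_add_rdistrib diag_mat_mult_left)
    consider "\<iota> i < \<iota> j" | "i = j" | "\<iota> j < \<iota> i"
      using assms(1) by (metis injD linorder_neqE_nat)
    then show ?thesis
    proof cases
      case 1
      define Y where "Y = (U ** T)$i$j"
      have "i \<noteq> j" using 1 by auto
      have "T$i$j * d j = d j * c i j * Y"
        using T_rec[OF 1] by (simp add: central mult.assoc Y_def)
      also have "\<dots> = ((d j - d i) * c i j + d i * c i j) * Y"
        by (simp add: algebra_simps)
      also have "\<dots> = Y + d i * T$i$j"
        using T_rec[OF 1] c[OF \<open>i \<noteq> j\<close>] by (simp add: ring_distribs mult.assoc Y_def)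
      finally show ?thesis
        using lhs by (simp add: diag_mat_mult_right Y_def add.commute)
    next
      case 2
      then show ?thesis
        using lhs T UT by (simp add: diag_mat_mult_right upper_unitriangular_def strictly_upper_def)
    next
      case 3
      then show ?thesis
        using lhs T UT by (simp add: diag_mat_mult_right upper_unitriangular_def strictly_upper_def)
    qed
  qed
  then have "(diag_mat d + U) ** T = T ** diag_mat d"
    by (simp add: vec_eq_iff)
  moreover obtain T' where T': "T ** T' = mat 1" "T' ** T = mat 1"
    using upper_unitriangular_invertible[OF assms(1) T] by (auto simp: invertible_def)
  ultimately have "diag_mat d + U = T ** diag_mat d ** T'"
    by (metis matrix_mul_assoc matrix_mul_rid)
  then show ?thesis
    using T' by (rule similar_matI[rotated 2])
qed

lemma zero_diagonal_eq_diff_of_similar: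
  fixes d :: "'n::finite \<Rightarrow> 'r::ring_1" and D :: "'r^'n^'n"
  assumes central: "\<And>i x. d i * x = x * d i"
    and gaps: "\<And>i j. i \<noteq> j \<Longrightarrow> \<exists>c. (d j - d i) * c = 1"
    and zero_diagonal: "\<And>i. D$i$i = 0"
  shows "\<exists>M1 M2. D = M1 - M2 \<and> similar_mat M1 (diag_mat d) \<and> similar_mat M2 (diag_mat d)"
proof -
  define \<iota> :: "'n \<Rightarrow> nat" where "\<iota> = to_nat"
  define \<iota>' where "\<iota>' i = Max (range \<iota>) - \<iota> i" for i
  have "inj \<iota>"
    by (simp add: \<iota>_def)
  have le_Max: "\<iota> i \<le> Max (range \<iota>)" for i
    by simp
  have \<iota>'_less: "\<iota>' i < \<iota>' j \<longleftrightarrow> \<iota> j < \<iota> i" for i j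
    unfolding \<iota>'_def using le_Max[of i] le_Max[of j] by linarith
  have "inj \<iota>'"
  proof (rule injI)
    fix x y
    assume "\<iota>' x = \<iota>' y"
    then have "\<iota> x = \<iota> y"
      using \<iota>'_less[of x y] \<iota>'_less[of y x] by auto
    then show "x = y"
      using \<open>inj \<iota>\<close> by (simp add: inj_eq)
  qed
  define U :: "'r^'n^'n" where "U = (\<chi> i j. if \<iota> i < \<iota> j then D$i$j else 0)"
  define L :: "'r^'n^'n" where "L = (\<chi> i j. if \<iota>' i < \<iota>' j then - D$i$j else 0)"
  have "strictly_upper \<iota> U" "strictly_upper \<iota>' L"
    by (auto simp: strictly_upper_def U_def L_def)
  then have "similar_mat (diag_mat d + U) (diag_mat d)" "similar_mat (diag_mat d + L) (diag_mat d)"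
    using \<open>inj \<iota>\<close> \<open>inj \<iota>'\<close> central gaps by (auto intro: diag_mat_plus_strictly_upper_similar)
  moreover have "D$i$j = ((diag_mat d + U) - (diag_mat d + L))$i$j" for i j
  proof (cases "i = j")
    case True
    then show ?thesis
      using zero_diagonal by (simp add: U_def L_def)
  next
    case False
    then have "\<iota> i \<noteq> \<iota> j"
      using \<open>inj \<iota>\<close> by (simp add: inj_eq)
    then show ?thesis
      by (auto simp: U_def L_def \<iota>'_less diag_mat_def)
  qed
  ultimately show ?thesis
    by (metis vec_eq_iff)
qed

lemma infinite_range_poly:
  fixes p :: "'f::field poly"
  assumes "infinite (UNIV :: 'f set)" "degree p > 0"
  shows "infinite (range (poly p))"
proof
  assume finite_range: "finite (range (poly p))"
  have "finite (poly p -` {y})" for y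
  proof -
    have "p - [:y:] \<noteq> 0"
      using assms(2) by auto
    then have "finite {x. poly (p - [:y:]) x = 0}"
      by (rule poly_roots_finite)
    then show ?thesis
      by (simp add: vimage_def)
  qed
  then have "finite (poly p -` range (poly p))"
    using finite_finite_vimage_IntI[OF finite_range, of "poly p" UNIV] by simp
  then show False
    using assms(1) by (simp add: vimage_def)
qed

lemma exists_inj_poly_comp:
  fixes p :: "'f::field poly"
  assumes "infinite (UNIV :: 'f set)" "degree p > 0"
  shows "\<exists>m :: 'n::finite \<Rightarrow> 'f. inj (\<lambda>i. poly p (m i))"
proof -
  obtain f :: "nat \<Rightarrow> 'f" where f: "inj f" "range f \<subseteq> range (poly p)"
    using infinite_countable_subset[OF infinite_range_poly[OF assms]] by blast
  define m :: "'n \<Rightarrow> 'f" where "m i = inv (poly p) (f (to_nat i))" for i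
  have "poly p (m i) = f (to_nat i)" for i
    using f(2) unfolding m_def by (intro f_inv_into_f) blast
  then have "inj (\<lambda>i. poly p (m i))"
    using f(1) by (auto intro!: injI dest: injD)
  then show ?thesis by blast
qed

theorem theorem3p4:
  fixes \<phi> :: "'f::field \<Rightarrow> 'r::ring_1"
    and p :: "'f poly"
    and A :: "'r^'n::finite^'n"
  assumes "infinite (UNIV :: 'f set)"
    and "alg_struct \<phi>"
    and "CARD('n) > 1"
    and "degree p > 0"
    and "\<exists>P P' D :: 'r^'n^'n. P ** P' = mat 1 \<and> P' ** P = mat 1 \<and> (\<forall>i. D $ i $ i = 0)
                 \<and> A = P ** D ** P'"
  shows "\<exists>A1 B1. A = poly_mat \<phi> p (A1 ** B1) - poly_mat \<phi> p (B1 ** A1)"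
proof -
  obtain P P' D :: "'r^'n^'n" where P: "P ** P' = mat 1" "P' ** P = mat 1"
    and D: "\<And>i. D $ i $ i = 0" and A: "A = P ** D ** P'"
    using assms(5) by blast
  obtain m :: "'n \<Rightarrow> 'f" where m: "inj (\<lambda>i. poly p (m i))"
    using exists_inj_poly_comp[OF assms(1,4)] by blast
  define d where "d i = \<phi> (poly p (m i))" for i
  have central: "d i * x = x * d i" for i x
    unfolding d_def by (rule alg_struct_central[OF assms(2)])
  have gaps: "\<exists>c. (d j - d i) * c = 1" if "i \<noteq> j" for i j
  proof
    have "poly p (m j) \<noteq> poly p (m i)"
      using m that by (auto dest: injD)
    then show "(d j - d i) * \<phi> (inverse (poly p (m j) - poly p (m i))) = 1"
      unfolding d_def by (rule alg_struct_diff_right_inverse[OF assms(2)])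
  qed
  obtain M1 M2 where M: "D = M1 - M2" "similar_mat M1 (diag_mat d)" "similar_mat M2 (diag_mat d)"
    using zero_diagonal_eq_diff_of_similar[of d D] central gaps D by blast
  have conj: "similar_mat (P ** M ** P') M" for M
    using P by (rule similar_matI) simp
  have "diag_mat d = poly_mat \<phi> p (diag_mat (\<lambda>i. \<phi> (m i)))"
    unfolding d_def by (rule poly_mat_diag_mat[OF assms(2), symmetric])
  then have "similar_mat (P ** M1 ** P') (poly_mat \<phi> p (diag_mat (\<lambda>i. \<phi> (m i))))"
    and "similar_mat (P ** M2 ** P') (poly_mat \<phi> p (diag_mat (\<lambda>i. \<phi> (m i))))"
    using similar_mat_trans[OF conj M(2)] similar_mat_trans[OF conj M(3)] by simp_all
  moreover have "A = P ** M1 ** P' - P ** M2 ** P'"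
    using A M(1) by (simp add: matrix_diff_ldistrib matrix_diff_rdistrib)
  ultimately show ?thesis
    using similar_poly_mat_diff_eq_poly_commutator[OF assms(2)] by metis
qed

end
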